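(* For every $n\ge1$ there is a general ordinal setting with $n$ agents and $m=n+1$ outcomes and a preference profile on which every outcome has rank-approximation factor at least $\min\{n,m-1\}$; consequently no deterministic mechanism for general ordinal settings can have rank-approximation factor better than $\min\{n,m-1\}$.
   Context: General ordinal setting: $n$ agents, $m$ outcomes; each agent has a strict total order $\succ_j$ on the outcomes (any strict order allowed). $\mathrm{rank}_i(o;\succ)$ is the number of agents having $o$ among their top $i$ outcomes; $\mathrm{maxrank}_i(\succ)=\max_o\mathrm{rank}_i(o;\succ)$. An outcome $o$ has rank-approximation factor $\alpha$ on $\succ$ if $\mathrm{rank}_i(o;\succ)\ge\mathrm{maxrank}_i(\succ)/\alpha$ for all $i\in[m]$; a deterministic mechanism has factor $\alpha$ if its output has factor $\alpha$ on every profile. *)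

theory Defs
  imports Complex_Main
begin

text \<open>General ordinal setting: agents are 0..<n, outcomes are 0..<m.
A preference profile assigns to each agent j a list (its strict order,
most preferred first) which is a permutation of the outcomes.\<close>

definition valid_profile :: "nat \<Rightarrow> nat \<Rightarrow> (nat \<Rightarrow> nat list) \<Rightarrow> bool" where
  "valid_profile n m P \<longleftrightarrow>
     (\<forall>j<n. distinct (P j) \<and> set (P j) = {0..<m})"

definition rank :: "nat \<Rightarrow> (nat \<Rightarrow> nat list) \<Rightarrow> nat \<Rightarrow> nat \<Rightarrow> nat" where
  "rank n P i x = card {j \<in> {0..<n}. x \<in> set (take i (P j))}"

definition maxrank :: "nat \<Rightarrow> nat \<Rightarrow> (nat \<Rightarrow> nat list) \<Rightarrow> nat \<Rightarrow> nat" where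
  "maxrank n m P i = Max ((\<lambda>x. rank n P i x) ` {0..<m})"

definition has_factor :: "nat \<Rightarrow> nat \<Rightarrow> (nat \<Rightarrow> nat list) \<Rightarrow> nat \<Rightarrow> real \<Rightarrow> bool" where
  "has_factor n m P x \<alpha> \<longleftrightarrow>
     (\<forall>i\<in>{1..m}. real (rank n P i x) \<ge> real (maxrank n m P i) / \<alpha>)"

definition mech_has_factor :: "nat \<Rightarrow> nat \<Rightarrow> ((nat \<Rightarrow> nat list) \<Rightarrow> nat) \<Rightarrow> real \<Rightarrow> bool" where
  "mech_has_factor n m M \<alpha> \<longleftrightarrow>
     (\<forall>P. valid_profile n m P \<longrightarrow> has_factor n m P (M P) \<alpha>)"

end

theory Submission
  imports Defs
begin

text \<open>On the profile in which agent \<open>j < n\<close> ranks its own outcome \<open>j\<close> first and the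
common outcome \<open>n\<close> second, every private outcome is in the top two of a single agent
while \<open>n\<close> is in the top two of all \<open>n\<close> agents, so a private outcome has factor at
least \<open>n\<close>; and \<open>n\<close> itself is nobody's favourite although some outcome is, so it has
no finite factor at all.\<close>

lemma rank_le_maxrank: "y < m \<Longrightarrow> rank n P i y \<le> maxrank n m P i"
  unfolding maxrank_def by (rule Max_ge) auto

lemma has_factor_rank_le:
  assumes "has_factor n m P x \<alpha>" "\<alpha> > 0" "i \<in> {1..m}" "y < m"
  shows "real (rank n P i y) \<le> \<alpha> * real (rank n P i x)"
proof -
  have "real (rank n P i y) \<le> real (maxrank n m P i)"
    using rank_le_maxrank[OF assms(4)] by simp
  also have "\<dots> \<le> \<alpha> * real (rank n P i x)"
    using assms(1,2,3) unfolding has_factor_def by (auto simp: field_simps)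
  finally show ?thesis .
qed

definition dissent_profile :: "nat \<Rightarrow> nat \<Rightarrow> nat list" where
  "dissent_profile n j = [j, n] @ filter (\<lambda>k. k \<noteq> j) [0..<n]"

lemma valid_dissent_profile: "valid_profile n (n + 1) (dissent_profile n)"
  unfolding valid_profile_def dissent_profile_def by auto

lemma take_dissent_profile:
  "take (Suc 0) (dissent_profile n j) = [j]" "take 2 (dissent_profile n j) = [j, n]"
  by (simp_all add: dissent_profile_def numeral_2_eq_2)

lemma rank_dissent_profile_own:
  assumes "x < n"
  shows "rank n (dissent_profile n) 1 x = 1" "rank n (dissent_profile n) 2 x = 1"
proof -
  have "{j \<in> {0..<n}. x \<in> set (take i (dissent_profile n j))} = {x}" if "i \<in> {1, 2}" for i
    using assms that by (auto simp: take_dissent_profile)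
  then show "rank n (dissent_profile n) 1 x = 1" "rank n (dissent_profile n) 2 x = 1"
    by (simp_all add: rank_def)
qed

lemma rank_dissent_profile_common:
  "rank n (dissent_profile n) 1 n = 0" "rank n (dissent_profile n) 2 n = n"
proof -
  have "{j \<in> {0..<n}. n \<in> set (take 1 (dissent_profile n j))} = {}"
       "{j \<in> {0..<n}. n \<in> set (take 2 (dissent_profile n j))} = {0..<n}"
    by (auto simp: take_dissent_profile)
  then show "rank n (dissent_profile n) 1 n = 0" "rank n (dissent_profile n) 2 n = n"
    by (simp_all add: rank_def)
qed

lemma dissent_profile_factor_ge:
  assumes "n \<ge> 1" "x < n + 1" "\<alpha> > 0" "has_factor n (n + 1) (dissent_profile n) x \<alpha>"
  shows "\<alpha> \<ge> real n"
proof (cases "x < n")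
  case True
  have "real (rank n (dissent_profile n) 2 n) \<le> \<alpha> * real (rank n (dissent_profile n) 2 x)"
    by (rule has_factor_rank_le[OF assms(4,3)]) (use assms(1) in auto)
  then show ?thesis
    unfolding rank_dissent_profile_own[OF True] rank_dissent_profile_common by simp
next
  case False
  with assms have "x = n" "0 < n" by simp_all
  have "real (rank n (dissent_profile n) 1 0) \<le> \<alpha> * real (rank n (dissent_profile n) 1 x)"
    by (rule has_factor_rank_le[OF assms(4,3)]) auto
  then have "real 1 \<le> \<alpha> * real 0"
    unfolding rank_dissent_profile_own[OF \<open>0 < n\<close>] \<open>x = n\<close>
      rank_dissent_profile_common .
  then show ?thesis by simp
qed

theorem theorem15:
  fixes n :: nat
  assumes "n \<ge> 1"
  shows "(\<exists>P. valid_profile n (n + 1) P \<and>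
            (\<forall>x<n + 1. \<forall>\<alpha>>0. has_factor n (n + 1) P x \<alpha>
                 \<longrightarrow> \<alpha> \<ge> real (min n (n + 1 - 1))))
       \<and> (\<forall>M. (\<forall>P. valid_profile n (n + 1) P \<longrightarrow> M P < n + 1) \<longrightarrow>
            (\<forall>\<alpha>>0. mech_has_factor n (n + 1) M \<alpha> \<longrightarrow> \<alpha> \<ge> real (min n (n + 1 - 1))))"
proof -
  note lower_bound = dissent_profile_factor_ge[OF assms]
  have "\<alpha> \<ge> real n"
    if "\<forall>P. valid_profile n (n + 1) P \<longrightarrow> M P < n + 1" "\<alpha> > 0" "mech_has_factor n (n + 1) M \<alpha>"
    for M and \<alpha> :: real
    using that valid_dissent_profile lower_bound unfolding mech_has_factor_def by blast
  then show ?thesis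
    using valid_dissent_profile lower_bound by (auto intro!: exI[of _ "dissent_profile n"])
qed

end
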